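(* Let $\mathbb{F}$ be a finite field and $f\colon\mathbb{F}^n\times[m]\to\mathbb{F}$ be such that the map $x\mapsto (f(x,1),\dots,f(x,m))$ is $k$-wise independent. Suppose there is a non-adaptive static data structure for $f$ with space $s\ge 2$ and query time $t=2$, and suppose $k>8\log(s)$. Then \[ s \;\ge\; m - \frac{16\, m\log(s)}{k}. \]
   Context: A function $F\colon\mathbb{F}^n\to\mathbb{F}^m$ is $k$-wise independent if for every set of $k$ output coordinates, when $x$ is uniform on $\mathbb{F}^n$, the restriction of $F(x)$ to these coordinates is uniformly distributed on $\mathbb{F}^k$. A non-adaptive static data structure with space $s$ and query time $t$ for $f\colon\mathbb{F}^n\times[m]\to\mathbb{F}$ consists of an arbitrary preprocessing map $x\mapsto P(x)\in\mathbb{F}^s$ and, for each query $i\in[m]$, a fixed set of at most $t$ cell positions (independent of $x$) together with an arbitrary function of those cells' contents that equals $f(x,i)$ for all $x$. Logarithms are base 2. *)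

theory Defs
  imports Complex_Main
begin

text \<open>Inputs in F^n are lists of length n over the field; queries are indexed by [m] = {1..m}.\<close>

definition inputs :: "nat \<Rightarrow> 'a list set" where
  "inputs n = {x. length x = n}"

definition kwise_independent ::
  "nat \<Rightarrow> nat \<Rightarrow> ('a::finite list \<Rightarrow> nat \<Rightarrow> 'a) \<Rightarrow> nat \<Rightarrow> bool" where
  "kwise_independent n m f k \<longleftrightarrow>
     (\<forall>S. S \<subseteq> {1..m} \<longrightarrow> card S = k \<longrightarrow>
        (\<forall>y :: nat \<Rightarrow> 'a.
           card {x \<in> inputs n. \<forall>i\<in>S. f x i = y i} * card (UNIV :: 'a set) ^ k = card (inputs n :: 'a list set)))"

text \<open>Non-adaptive static data structure: preprocessing P x, a cell array indexed by {0..<s};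
  for each query i, a fixed probe set Q i of at most t cells (independent of x) and a
  function g i of the probed cells' contents computing f x i.\<close>

definition nonadaptive_ds ::
  "nat \<Rightarrow> nat \<Rightarrow> ('a::zero list \<Rightarrow> nat \<Rightarrow> 'a) \<Rightarrow> nat \<Rightarrow> nat \<Rightarrow> bool" where
  "nonadaptive_ds n m f s t \<longleftrightarrow>
     (\<exists>(P :: 'a list \<Rightarrow> nat \<Rightarrow> 'a) (Q :: nat \<Rightarrow> nat set) (g :: nat \<Rightarrow> (nat \<Rightarrow> 'a) \<Rightarrow> 'a).
        \<forall>i\<in>{1..m}. Q i \<subseteq> {..<s} \<and> card (Q i) \<le> t \<and>
          (\<forall>x\<in>inputs n. f x i = g i (\<lambda>j. if j \<in> Q i then P x j else 0)))"

end

(*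
  The probe sets of the queries form a multigraph on the s cells, since each query reads at
  most two cells. k-wise independence gives Hall's condition for every set A of at most k
  queries: the answers to A are determined by the cells they probe, yet take all |F|^|A|
  values, so A probes at least |A| cells.

  It remains to show that in a multigraph on n vertices with edge weights w, in which every
  edge set of weight at most K meets at least as many vertices as it has edges,
  #edges - n <= 16 log n * w(edges) / K. A vertex of degree at most two
  is deleted, together with its edge, or with its two edges merged into one that carries
  the sum of their weights; this preserves Hall's condition and does not increase
  #edges - n. If all degrees are at least three, balls around a vertex grow by a factor 3/2
  per step for as long as Hall's condition holds for their breadth-first forests plus two
  edges (a Moore bound), so some set of at most 16 log n edges meets fewer vertices than it
  has edges. Its weight exceeds K, hence its heaviest edge weighs more than K / (16 log n),
  and deleting that edge lowers the right-hand side by more than one.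
*)

theory Submission
  imports Defs "HOL-Library.FuncSet"
begin

definition hall_condition :: "('e \<Rightarrow> nat) \<Rightarrow> nat \<Rightarrow> 'e set \<Rightarrow> ('e \<Rightarrow> 'v set) \<Rightarrow> bool" where
  "hall_condition w K I E \<longleftrightarrow> (\<forall>A\<subseteq>I. sum w A \<le> K \<longrightarrow> card A \<le> card (\<Union>(E ` A)))"

lemma hall_condition_subset: "hall_condition w K I E \<Longrightarrow> J \<subseteq> I \<Longrightarrow> hall_condition w K J E"
  unfolding hall_condition_def by blast

lemma sum_merge_weights:
  assumes "finite A" "j1 \<in> A" "j2 \<notin> A"
  shows "sum (w(j1 := w j1 + w j2)) A = sum w (insert j2 A)"
proof -
  have "sum (w(j1 := w j1 + w j2)) A = w j1 + w j2 + sum (w(j1 := w j1 + w j2)) (A - {j1})"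
    using sum.remove[OF assms(1,2), of "w(j1 := w j1 + w j2)"] by (simp only: fun_upd_same)
  also have "sum (w(j1 := w j1 + w j2)) (A - {j1}) = sum w (A - {j1})"
    by (intro sum.cong) auto
  also have "w j1 + w j2 + sum w (A - {j1}) = w j2 + sum w A"
    using sum.remove[OF assms(1,2), of w] by (simp add: ac_simps)
  finally show ?thesis using assms(1,3) by simp
qed

locale rank2_hypergraph =
  fixes V :: "'v set" and I :: "'e set" and E :: "'e \<Rightarrow> 'v set"
  assumes finite_vertices: "finite V" and finite_edges: "finite I"
    and edge_subset: "i \<in> I \<Longrightarrow> E i \<subseteq> V"
    and card_edge: "i \<in> I \<Longrightarrow> card (E i) \<le> 2"
begin

definition degree :: "'v \<Rightarrow> nat" where
  "degree u = card {i \<in> I. u \<in> E i}"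

definition covered :: "'v \<Rightarrow> 'e set \<Rightarrow> 'v set" where
  "covered x S = insert x (\<Union>(E ` S))"

section \<open>Breadth-first forests\<close>

text \<open>With the root \<open>x\<close> counted as a vertex, \<open>T\<close> is a forest iff each of its subsets covers more
  vertices than it has edges; a tight subset of a forest is then a subtree containing \<open>x\<close>.\<close>

definition forest :: "'v \<Rightarrow> 'e set \<Rightarrow> bool" where
  "forest x T \<longleftrightarrow> T \<subseteq> I \<and> (\<forall>S\<subseteq>T. card S < card (covered x S))"

definition tight :: "'v \<Rightarrow> 'e set \<Rightarrow> bool" where
  "tight x P \<longleftrightarrow> card (covered x P) \<le> card P + 1"

primrec ball :: "'v \<Rightarrow> nat \<Rightarrow> 'v set" where
  "ball x 0 = {x}"
| "ball x (Suc j) = ball x j \<union> \<Union>(E ` {i \<in> I. E i \<inter> ball x j \<noteq> {}})"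

lemma finite_edge: "i \<in> I \<Longrightarrow> finite (E i)"
  using edge_subset finite_vertices by (rule finite_subset)

lemma finite_covered: "S \<subseteq> I \<Longrightarrow> finite (covered x S)"
  unfolding covered_def using finite_edge finite_edges by (auto intro: finite_subset)

lemma covered_mono: "S \<subseteq> T \<Longrightarrow> covered x S \<subseteq> covered x T"
  unfolding covered_def by blast

lemma ball_subset: "ball x j \<subseteq> insert x V"
  by (induction j) (use edge_subset in auto)

lemma finite_ball: "finite (ball x j)"
  using ball_subset finite_vertices by (meson finite_insert finite_subset)

lemma center_in_ball: "x \<in> ball x j"
  by (induction j) auto

lemma parent_edge:
  assumes "y \<in> ball x (Suc j)" "y \<notin> ball x j"
  shows "\<exists>i\<in>I. \<exists>b\<in>ball x j. E i = {y, b}"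
proof -
  obtain i b where i: "i \<in> I" "y \<in> E i" "b \<in> E i" "b \<in> ball x j"
    using assms by auto
  have "y \<noteq> b" using i(4) assms(2) by blast
  have "{y, b} = E i"
  proof (rule card_seteq)
    show "card (E i) \<le> card {y, b}" using card_edge[OF i(1)] \<open>y \<noteq> b\<close> by simp
  qed (use i finite_edge in auto)
  with i show ?thesis by blast
qed

lemma forest_insert:
  assumes "forest x T" "e \<in> I" "y \<in> E e" "y \<notin> covered x T"
  shows "forest x (insert e T)"
  unfolding forest_def
proof (intro conjI allI impI)
  show "insert e T \<subseteq> I" using assms(1,2) unfolding forest_def by blast
next
  fix S assume S: "S \<subseteq> insert e T"
  show "card S < card (covered x S)"
  proof (cases "e \<in> S")
    case False
    then show ?thesis using S assms(1) unfolding forest_def by blast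
  next
    case True
    define S' where "S' = S - {e}"
    have S'T: "S' \<subseteq> T" using S unfolding S'_def by blast
    have TI: "T \<subseteq> I" using assms(1) unfolding forest_def by blast
    have "finite S" using S TI assms(2) finite_edges by (meson finite_subset insert_subset)
    then have "card S = Suc (card S')" unfolding S'_def using True by (rule card_Suc_Diff1[symmetric])
    also have "\<dots> < Suc (card (covered x S'))" using S'T assms(1) unfolding forest_def by blast
    also have "\<dots> = card (insert y (covered x S'))"
      using assms(4) covered_mono[OF S'T] finite_covered S'T TI by (subst card_insert_disjoint) auto
    also have "\<dots> \<le> card (covered x S)"
      using True assms(1-3) S unfolding forest_def covered_def S'_def
      by (intro card_mono finite_covered[unfolded covered_def]) auto
    finally show ?thesis .
  qed
qed

lemma forest_extend:
  assumes "finite N" "forest x T" "covered x T \<subseteq> B" "N \<inter> B = {}"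
    and "\<And>y. y \<in> N \<Longrightarrow> p y \<in> I \<and> y \<in> E (p y) \<and> E (p y) \<subseteq> insert y B"
  shows "forest x (T \<union> p ` N)"
  using assms(1,4,5)
proof (induction N rule: finite_induct)
  case empty
  then show ?case using assms(2) by simp
next
  case (insert y N)
  have "covered x (T \<union> p ` N) \<subseteq> B \<union> N"
    using assms(3) insert.prems(2) unfolding covered_def by blast
  then have "y \<notin> covered x (T \<union> p ` N)"
    using insert.hyps(2) insert.prems(1) by blast
  with insert have "forest x (insert (p y) (T \<union> p ` N))"
    by (intro forest_insert) auto
  then show ?case by simp
qed

lemma tight_insert:
  assumes "tight x P" "P \<subseteq> I" "e \<notin> P" "E e \<subseteq> insert y (covered x P)"
  shows "tight x (insert e P)"
proof -
  have fin: "finite (covered x P)" using assms(2) by (rule finite_covered)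
  have "card (covered x (insert e P)) \<le> card (insert y (covered x P))"
    using assms(4) fin by (intro card_mono) (auto simp: covered_def)
  also have "\<dots> \<le> card (covered x P) + 1"
    using fin by (simp add: card_insert_if)
  finally have "card (covered x (insert e P)) \<le> card (covered x P) + 1" .
  moreover have "card (insert e P) = card P + 1"
    using assms(2,3) finite_edges by (simp add: finite_subset)
  ultimately show ?thesis using assms(1) unfolding tight_def by linarith
qed

text \<open>Submodularity of \<open>card \<circ> covered x\<close>, with the forest property applied to \<open>Q \<inter> Z\<close>.\<close>

lemma tight_Un:
  assumes "forest x T" "Q \<subseteq> T" "Z \<subseteq> T" "tight x Q" "tight x Z"
  shows "tight x (Q \<union> Z)"
proof -
  have TI: "T \<subseteq> I" and acyclic: "card (Q \<inter> Z) < card (covered x (Q \<inter> Z))"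
    using assms(1,2) unfolding forest_def by (auto simp: le_infI1)
  have finQ: "finite Q" and finZ: "finite Z"
    using assms(2,3) TI finite_edges by (auto intro: finite_subset)
  have finSQ: "finite (covered x Q)" and finSZ: "finite (covered x Z)"
    using assms(2,3) TI by (auto intro: finite_covered)
  have "card (covered x (Q \<inter> Z)) \<le> card (covered x Q \<inter> covered x Z)"
    using finSQ by (intro card_mono) (auto simp: covered_def)
  moreover have "card (covered x Q \<union> covered x Z) + card (covered x Q \<inter> covered x Z) = card (covered x Q) + card (covered x Z)"
    using card_Un_Int[OF finSQ finSZ] by simp
  moreover have "card (Q \<union> Z) + card (Q \<inter> Z) = card Q + card Z"
    using card_Un_Int[OF finQ finZ] by simp
  moreover have "covered x (Q \<union> Z) = covered x Q \<union> covered x Z"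
    unfolding covered_def by blast
  ultimately show ?thesis
    using acyclic assms(4,5) unfolding tight_def by presburger
qed

lemma tight_UN:
  assumes "finite X" "forest x T" "\<And>a. a \<in> X \<Longrightarrow> P a \<subseteq> T \<and> tight x (P a)"
  shows "tight x (\<Union>a\<in>X. P a)"
  using assms(1,3)
proof (induction X rule: finite_induct)
  case empty
  then show ?case by (simp add: tight_def covered_def)
next
  case (insert a X)
  then have "tight x (P a \<union> (\<Union>a\<in>X. P a))"
    by (intro tight_Un[OF assms(2)]) auto
  then show ?case by simp
qed

definition short_paths :: "'v \<Rightarrow> 'e set \<Rightarrow> nat \<Rightarrow> 'v set \<Rightarrow> bool" where
  "short_paths x T r B \<longleftrightarrow> (\<forall>y\<in>B. \<exists>P\<subseteq>T. card P \<le> r \<and> tight x P \<and> y \<in> covered x P)"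

lemma short_paths_extend:
  assumes "short_paths x T j B" "T \<subseteq> I" "\<forall>i\<in>T. E i \<subseteq> B" "N \<inter> B = {}"
    and par: "\<And>y. y \<in> N \<Longrightarrow> p y \<in> I \<and> par y \<in> B \<and> E (p y) = {y, par y}"
  shows "short_paths x (T \<union> p ` N) (Suc j) (B \<union> N)"
  unfolding short_paths_def
proof
  fix y assume "y \<in> B \<union> N"
  then show "\<exists>P\<subseteq>T \<union> p ` N. card P \<le> Suc j \<and> tight x P \<and> y \<in> covered x P"
  proof
    assume "y \<in> B"
    then obtain P where "P \<subseteq> T" "card P \<le> j" "tight x P" "y \<in> covered x P"
      using assms(1) unfolding short_paths_def by blast
    then show ?thesis by (intro exI[of _ P]) auto
  next
    assume y: "y \<in> N"
    obtain P where P: "P \<subseteq> T" "card P \<le> j" "tight x P" "par y \<in> covered x P"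
      using assms(1) par[OF y] unfolding short_paths_def by blast
    have "p y \<notin> P" using P(1) assms(3,4) par[OF y] y by blast
    then have "tight x (insert (p y) P)"
      using P assms(2) par[OF y] by (intro tight_insert[where y = y]) auto
    moreover have "card (insert (p y) P) \<le> Suc j"
      using P(2) by (intro card_insert_le_m1) simp_all
    moreover have "y \<in> covered x (insert (p y) P)"
      using par[OF y] unfolding covered_def by blast
    ultimately show ?thesis using P(1) y by blast
  qed
qed

text \<open>Each vertex first reached in round \<open>j + 1\<close> is attached to the forest by one edge to a
  vertex reached earlier.\<close>

lemma bfs_forest:
  "\<exists>T. forest x T \<and> (\<forall>i\<in>T. E i \<subseteq> ball x j) \<and> short_paths x T j (ball x j)"
proof (induction j)
  case 0
  have "forest x {}" "tight x {}"
    by (simp_all add: forest_def tight_def covered_def)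
  then show ?case
    by (intro exI[of _ "{}"]) (auto simp: short_paths_def covered_def)
next
  case (Suc j)
  define B where "B = ball x j"
  define N where "N = ball x (Suc j) - B"
  have ball_Suc: "ball x (Suc j) = B \<union> N" unfolding N_def B_def by auto
  obtain T where T: "forest x T" and TB: "\<forall>i\<in>T. E i \<subseteq> B" and paths: "short_paths x T j B"
    using Suc.IH unfolding B_def by blast
  have "\<forall>y\<in>N. \<exists>i\<in>I. \<exists>b\<in>B. E i = {y, b}"
    unfolding N_def B_def using parent_edge by blast
  then obtain p par where par: "\<And>y. y \<in> N \<Longrightarrow> p y \<in> I \<and> par y \<in> B \<and> E (p y) = {y, par y}"
    by metis
  have NB: "N \<inter> B = {}" unfolding N_def by blast
  have "covered x T \<subseteq> B"
    using TB center_in_ball unfolding covered_def B_def by blast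
  moreover have "finite N" unfolding N_def using finite_ball by blast
  ultimately have "forest x (T \<union> p ` N)"
    using T NB par by (intro forest_extend) auto
  moreover have "\<forall>i\<in>T \<union> p ` N. E i \<subseteq> B \<union> N"
    using TB par by fastforce
  moreover have "short_paths x (T \<union> p ` N) (Suc j) (B \<union> N)"
    using paths T TB NB par unfolding forest_def by (intro short_paths_extend) auto
  ultimately show ?case unfolding ball_Suc by blast
qed

section \<open>The Moore bound\<close>

lemma sum_degree_le: "finite W \<Longrightarrow> (\<Sum>y\<in>W. degree y) \<le> 2 * card {i \<in> I. E i \<inter> W \<noteq> {}}"
proof -
  assume W: "finite W"
  have "(\<Sum>y\<in>W. degree y) = (\<Sum>y\<in>W. \<Sum>i\<in>{i \<in> I. y \<in> E i}. 1)"
    unfolding degree_def by simp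
  also have "\<dots> = (\<Sum>i\<in>I. \<Sum>y\<in>{y \<in> W. y \<in> E i}. 1)"
    by (rule sum.swap_restrict[OF W finite_edges])
  also have "\<dots> = (\<Sum>i\<in>{i \<in> I. E i \<inter> W \<noteq> {}}. card (E i \<inter> W))"
    using finite_edges by (intro sum.mono_neutral_cong_right) (auto simp: Int_commute Collect_conj_eq)
  also have "\<dots> \<le> (\<Sum>i\<in>{i \<in> I. E i \<inter> W \<noteq> {}}. 2)"
  proof (rule sum_mono)
    fix i assume "i \<in> {i \<in> I. E i \<inter> W \<noteq> {}}"
    then have "card (E i \<inter> W) \<le> card (E i)" by (intro card_mono finite_edge) auto
    also have "\<dots> \<le> 2" using \<open>i \<in> _\<close> card_edge by simp
    finally show "card (E i \<inter> W) \<le> 2" .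
  qed
  finally show ?thesis by simp
qed

lemma tight_cover:
  assumes "forest x T" "short_paths x T r B" "finite X" "X \<subseteq> B"
  obtains Z where "Z \<subseteq> T" "tight x Z" "X \<subseteq> covered x Z" "card Z \<le> card X * r"
proof -
  have "\<forall>y\<in>X. \<exists>P\<subseteq>T. card P \<le> r \<and> tight x P \<and> y \<in> covered x P"
    using assms(2,4) unfolding short_paths_def by blast
  then obtain P where P: "\<And>y. y \<in> X \<Longrightarrow> P y \<subseteq> T \<and> card (P y) \<le> r \<and> tight x (P y) \<and> y \<in> covered x (P y)"
    by metis
  define Z where "Z = (\<Union>y\<in>X. P y)"
  have "Z \<subseteq> T" unfolding Z_def using P by blast
  moreover have "tight x Z" unfolding Z_def using assms(1,3) P by (intro tight_UN) auto
  moreover have "X \<subseteq> covered x Z"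
  proof
    fix y assume "y \<in> X"
    then have "P y \<subseteq> Z" unfolding Z_def by blast
    then show "y \<in> covered x Z" using P[OF \<open>y \<in> X\<close>] covered_mono by blast
  qed
  moreover have "card Z \<le> card X * r"
  proof -
    have "card Z \<le> (\<Sum>y\<in>X. card (P y))" unfolding Z_def by (rule card_UN_le[OF assms(3)])
    also have "\<dots> \<le> card X * r" using sum_bounded_above[of X "\<lambda>y. card (P y)" r] P by simp
    finally show ?thesis .
  qed
  ultimately show ?thesis by (rule that)
qed

text \<open>Two non-tree edges inside the region reached by short tree paths would, together with
  the paths to their endpoints, form at most \<open>4 r + 2\<close> edges covering too few vertices.\<close>

lemma unique_non_tree_edge:
  assumes "forest x T" "short_paths x T r B"
    and hall: "\<forall>A\<subseteq>I. card A \<le> 4 * r + 2 \<longrightarrow> card A \<le> card (\<Union>(E ` A))"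
    and "e \<in> I - T" "e' \<in> I - T" "E e \<subseteq> B" "E e' \<subseteq> B"
  shows "e = e'"
proof (rule ccontr)
  assume "e \<noteq> e'"
  define X where "X = E e \<union> E e'"
  have "finite X" "X \<subseteq> B" unfolding X_def using assms(4-7) finite_edge by auto
  then obtain Z where Z: "Z \<subseteq> T" "tight x Z" "X \<subseteq> covered x Z" "card Z \<le> card X * r"
    using tight_cover[OF assms(1,2)] by blast
  have "card X \<le> 4"
    unfolding X_def using card_Un_le[of "E e" "E e'"] card_edge[of e] card_edge[of e'] assms(4,5) by simp
  then have cardZ: "card Z \<le> 4 * r" using Z(4) by (meson le_trans mult_le_mono1)
  define A where "A = insert e (insert e' Z)"
  have ZI: "Z \<subseteq> I" using Z(1) assms(1) unfolding forest_def by blast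
  then have "finite Z" using finite_edges by (rule finite_subset)
  moreover have "e \<notin> Z" "e' \<notin> Z" using Z(1) assms(4,5) by auto
  ultimately have cardA: "card A = card Z + 2"
    unfolding A_def using \<open>e \<noteq> e'\<close> by simp
  have AI: "A \<subseteq> I" unfolding A_def using ZI assms(4,5) by blast
  have "\<Union>(E ` A) \<subseteq> covered x Z"
    using Z(3) unfolding A_def X_def covered_def by auto
  then have "card (\<Union>(E ` A)) \<le> card (covered x Z)"
    using ZI by (intro card_mono finite_covered)
  also have "\<dots> < card A" using Z(2) cardA unfolding tight_def by simp
  finally have "card (\<Union>(E ` A)) < card A" .
  moreover have "card A \<le> card (\<Union>(E ` A))"
    using cardA cardZ by (intro hall[rule_format, OF AI]) linarith
  ultimately show False by linarith
qed

text \<open>Counting degrees, the edges meeting \<open>ball x j\<close> number at least \<open>3/2 |ball x j|\<close>; they lie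
  inside \<open>ball x (j + 1)\<close>, so they are tree edges plus at most one more, hence at most
  \<open>|ball x (j + 1)|\<close>.\<close>

lemma ball_growth:
  assumes "x \<in> V" and deg: "\<forall>u\<in>V. 3 \<le> degree u"
    and hall: "\<forall>A\<subseteq>I. card A \<le> 4 * Suc j + 2 \<longrightarrow> card A \<le> card (\<Union>(E ` A))"
  shows "3 * card (ball x j) \<le> 2 * card (ball x (Suc j))"
proof -
  define B where "B = ball x (Suc j)"
  obtain T where T: "forest x T" and TB: "\<forall>i\<in>T. E i \<subseteq> B" and paths: "short_paths x T (Suc j) B"
    using bfs_forest unfolding B_def by blast
  have finB: "finite B" and xB: "x \<in> B" unfolding B_def by (rule finite_ball, rule center_in_ball)
  have TI: "T \<subseteq> I" using T unfolding forest_def by blast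
  define inner where "inner = {i \<in> I. E i \<subseteq> B}"
  have "finite (inner - T)" unfolding inner_def using finite_edges by simp
  then have "card (inner - T) \<le> 1"
    unfolding One_nat_def card_le_Suc0_iff_eq[OF \<open>finite (inner - T)\<close>]
    using unique_non_tree_edge[OF T paths hall] unfolding inner_def by blast
  moreover have "card T < card B"
  proof -
    have "card T < card (covered x T)" using T unfolding forest_def by blast
    also have "\<dots> \<le> card B"
      using TB xB unfolding covered_def by (intro card_mono[OF finB]) auto
    finally show ?thesis .
  qed
  moreover have "card inner \<le> card (T \<union> (inner - T))"
    using TI finite_edges by (intro card_mono) (auto simp: inner_def intro: finite_subset)
  moreover have "card (T \<union> (inner - T)) \<le> card T + card (inner - T)"
    by (rule card_Un_le)
  ultimately have inner_le: "card inner \<le> card B" by linarith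
  have ballV: "ball x j \<subseteq> V" using ball_subset assms(1) by blast
  have "3 * card (ball x j) \<le> (\<Sum>y\<in>ball x j. degree y)"
    using sum_bounded_below[of "ball x j" 3 degree] deg ballV by (simp add: mult.commute subset_iff)
  also have "\<dots> \<le> 2 * card {i \<in> I. E i \<inter> ball x j \<noteq> {}}"
    by (rule sum_degree_le[OF finite_ball])
  also have "\<dots> \<le> 2 * card inner"
    unfolding inner_def using finite_edges by (intro mult_le_mono2 card_mono) (auto simp: B_def)
  finally show ?thesis using inner_le unfolding B_def by linarith
qed

lemma moore_bound:
  assumes "x \<in> V" "\<forall>u\<in>V. 3 \<le> degree u" "2 ^ \<rho> * card V < 3 ^ \<rho>"
  shows "\<exists>A\<subseteq>I. card A \<le> 4 * \<rho> + 2 \<and> card (\<Union>(E ` A)) < card A"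
proof (rule ccontr)
  assume "\<not> ?thesis"
  then have hall: "\<forall>A\<subseteq>I. card A \<le> 4 * \<rho> + 2 \<longrightarrow> card A \<le> card (\<Union>(E ` A))"
    by (simp add: not_less)
  have "j \<le> \<rho> \<Longrightarrow> 3 ^ j \<le> 2 ^ j * card (ball x j)" for j
  proof (induction j)
    case (Suc j)
    have "\<forall>A\<subseteq>I. card A \<le> 4 * Suc j + 2 \<longrightarrow> card A \<le> card (\<Union>(E ` A))"
    proof (intro allI impI)
      fix A assume "A \<subseteq> I" "card A \<le> 4 * Suc j + 2"
      then show "card A \<le> card (\<Union>(E ` A))"
        using Suc.prems hall by simp
    qed
    then have growth: "3 * card (ball x j) \<le> 2 * card (ball x (Suc j))"
      by (rule ball_growth[OF assms(1,2)])
    have "3 ^ Suc j \<le> 3 * (2 ^ j * card (ball x j))"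
      using Suc by simp
    also have "\<dots> = 2 ^ j * (3 * card (ball x j))" by simp
    also have "\<dots> \<le> 2 ^ j * (2 * card (ball x (Suc j)))"
      using growth by (rule mult_le_mono2)
    also have "\<dots> = 2 ^ Suc j * card (ball x (Suc j))" by (simp only: power_Suc ac_simps)
    finally show ?case .
  qed simp
  then have "3 ^ \<rho> \<le> 2 ^ \<rho> * card (ball x \<rho>)" by blast
  also have "\<dots> \<le> 2 ^ \<rho> * card V"
    using ball_subset[of x \<rho>] assms(1) finite_vertices
    by (intro mult_le_mono2 card_mono) (auto simp: insert_absorb)
  finally show False using assms(3) by (rule leD[THEN notE])
qed

lemma small_deficient_edge_set:
  assumes "\<forall>u\<in>V. 3 \<le> degree u" "I \<noteq> {}" "real (card V) \<le> 2 powr L" "1 \<le> L"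
  shows "\<exists>A\<subseteq>I. real (card A) \<le> 16 * L \<and> card (\<Union>(E ` A)) < card A"
proof (cases "V = {}")
  case True
  obtain i where "i \<in> I" using assms(2) by blast
  then have "E i = {}" using edge_subset True by blast
  then show ?thesis using \<open>i \<in> I\<close> assms(4) by (intro exI[of _ "{i}"]) simp
next
  case False
  then obtain x where "x \<in> V" by blast
  define \<rho> where "\<rho> = nat \<lceil>2 * L\<rceil>" \<comment> \<open>\<open>(3/2)\<^sup>2 > 2\<close>, so \<open>(3/2)\<^sup>\<rho> > 2 powr L \<ge> |V|\<close>\<close>
  have \<rho>: "2 * L \<le> real \<rho>" "real \<rho> < 2 * L + 1"
    unfolding \<rho>_def using assms(4) by linarith+
  have "real (card V) < (3/2) ^ \<rho>"
  proof -
    have "real (card V) \<le> 2 powr L" by (rule assms(3))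
    also have "\<dots> < (9/4) powr L" using assms(4) by (intro powr_less_mono2) auto
    also have "(9/4::real) powr L = (3/2) powr (2 * L)"
      by (subst powr_powr[symmetric]) (simp add: power2_eq_square)
    also have "\<dots> \<le> (3/2) powr \<rho>" using \<rho>(1) by (intro powr_mono) auto
    also have "\<dots> = (3/2) ^ \<rho>" by (simp add: powr_realpow)
    finally show ?thesis .
  qed
  then have "real (2 ^ \<rho> * card V) < real (3 ^ \<rho>)" by (simp add: field_simps)
  then have "2 ^ \<rho> * card V < 3 ^ \<rho>" by linarith
  then obtain A where A: "A \<subseteq> I" "card A \<le> 4 * \<rho> + 2" "card (\<Union>(E ` A)) < card A"
    using moore_bound[OF \<open>x \<in> V\<close> assms(1)] by blast
  have "real (card A) \<le> 4 * \<rho> + 2" using A(2) by linarith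
  also have "\<dots> \<le> 16 * L" using assms(4) \<rho>(2) by linarith
  finally show ?thesis using A(1,3) by blast
qed

lemma exists_heavy_edge:
  assumes "hall_condition w K I E" "\<forall>u\<in>V. 3 \<le> degree u" "I \<noteq> {}"
    "real (card V) \<le> 2 powr L" "1 \<le> L"
  shows "\<exists>i\<in>I. real K < 16 * L * real (w i)"
proof (rule ccontr)
  assume "\<not> ?thesis"
  then have light: "real (w i) \<le> real K / (16 * L)" if "i \<in> I" for i
    using that assms(5) by (auto simp: field_simps not_less)
  obtain A where A: "A \<subseteq> I" "real (card A) \<le> 16 * L" "card (\<Union>(E ` A)) < card A"
    using small_deficient_edge_set[OF assms(2-5)] by blast
  have "real (sum w A) = (\<Sum>i\<in>A. real (w i))" by simp
  also have "\<dots> \<le> real (card A) * (real K / (16 * L))"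
    using sum_bounded_above[of A "\<lambda>i. real (w i)" "real K / (16 * L)"] light A(1) by blast
  also have "\<dots> \<le> 16 * L * (real K / (16 * L))"
    using A(2) by (intro mult_right_mono) auto
  also have "\<dots> = real K" using assms(5) by simp
  finally have "sum w A \<le> K" by linarith
  then show False using assms(1) A(1,3) unfolding hall_condition_def by (meson not_le)
qed

section \<open>Eliminating vertices and edges\<close>

lemma rank2_hypergraph_subset:
  assumes "V' \<subseteq> V" "J \<subseteq> I" "\<And>i. i \<in> J \<Longrightarrow> E i \<subseteq> V'"
  shows "rank2_hypergraph V' J E"
  using assms finite_vertices finite_edges card_edge
  by unfold_locales (auto intro: finite_subset)

lemma rank2_hypergraph_contract:
  assumes "j1 \<noteq> j2" "{i \<in> I. u \<in> E i} = {j1, j2}"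
  shows "rank2_hypergraph (V - {u}) (I - {j2}) (E(j1 := E j1 \<union> E j2 - {u}))"
proof
  have j: "j1 \<in> I" "j2 \<in> I" "u \<in> E j1" "u \<in> E j2" using assms(2) by blast+
  show "finite (V - {u})" "finite (I - {j2})" using finite_vertices finite_edges by auto
  fix i assume i: "i \<in> I - {j2}"
  show "(E(j1 := E j1 \<union> E j2 - {u})) i \<subseteq> V - {u}"
    using edge_subset i j assms(2) by auto
  show "card ((E(j1 := E j1 \<union> E j2 - {u})) i) \<le> 2"
  proof (cases "i = j1")
    case True
    have "card (E j1 \<union> E j2 - {u}) \<le> card (E j1 - {u}) + card (E j2 - {u})"
      by (simp add: Un_Diff card_Un_le)
    also have "\<dots> \<le> 2"
      using j card_edge[of j1] card_edge[of j2] finite_edge by simp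
    finally show ?thesis using True by simp
  next
    case False
    then show ?thesis using i card_edge by simp
  qed
qed

text \<open>A set of edges containing the merged edge \<open>j1\<close> corresponds to the set with \<open>j2\<close> added
  back, which has one more edge and covers exactly one more vertex, namely \<open>u\<close>.\<close>

lemma hall_condition_contract:
  assumes "j1 \<noteq> j2" "{i \<in> I. u \<in> E i} = {j1, j2}" and hall: "hall_condition w K I E"
  shows "hall_condition (w(j1 := w j1 + w j2)) K (I - {j2}) (E(j1 := E j1 \<union> E j2 - {u}))"
  unfolding hall_condition_def
proof (intro allI impI)
  let ?E' = "E(j1 := E j1 \<union> E j2 - {u})"
  have j: "j1 \<in> I" "j2 \<in> I" "u \<in> E j1" "u \<in> E j2" using assms(2) by blast+
  fix A assume A: "A \<subseteq> I - {j2}" "sum (w(j1 := w j1 + w j2)) A \<le> K"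
  have finA: "finite A" using A(1) finite_edges by (auto intro: finite_subset)
  show "card A \<le> card (\<Union>(?E' ` A))"
  proof (cases "j1 \<in> A")
    case False
    then have "sum (w(j1 := w j1 + w j2)) A = sum w A" "?E' ` A = E ` A"
      by (auto intro!: sum.cong)
    then show ?thesis using hall A unfolding hall_condition_def by auto
  next
    case True
    have "j2 \<notin> A" using A(1) by blast
    have "sum w (insert j2 A) \<le> K"
      using A(2) by (simp only: sum_merge_weights[OF finA True \<open>j2 \<notin> A\<close>, where w = w])
    then have "card (insert j2 A) \<le> card (\<Union>(E ` insert j2 A))"
      using A(1) j(2) by (intro hall[unfolded hall_condition_def, rule_format]) auto
    moreover have "\<Union>(E ` insert j2 A) = insert u (\<Union>(?E' ` A))"
      using True j A(1) assms(2) by auto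
    moreover have "u \<notin> \<Union>(?E' ` A)"
      using A(1) assms(2) by auto
    moreover have "finite (\<Union>(?E' ` A))"
      using finA A(1) j finite_edge by auto
    ultimately show ?thesis using finA \<open>j2 \<notin> A\<close> by simp
  qed
qed

lemma remove_low_degree_vertex:
  assumes "hall_condition w K I E" "degree u \<le> 2"
  obtains I' E' w' where "rank2_hypergraph (V - {u}) I' E'" "hall_condition w' K I' E'"
    "I' \<subseteq> I" "card I \<le> Suc (card I')" "sum w' I' \<le> sum w I"
proof -
  define D where "D = {i \<in> I. u \<in> E i}"
  have "finite D" using finite_edges unfolding D_def by simp
  have "card D = 0 \<or> card D = Suc 0 \<or> card D = 2" using assms(2) unfolding D_def degree_def by linarith
  then consider "D = {}" | j where "D = {j}" | j1 j2 where "D = {j1, j2}" "j1 \<noteq> j2"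
    using \<open>finite D\<close> by (auto simp: card_1_singleton_iff card_2_iff)
  then show ?thesis
  proof cases
    case 1
    then have "rank2_hypergraph (V - {u}) I E"
      using edge_subset unfolding D_def by (intro rank2_hypergraph_subset) auto
    then show ?thesis by (rule that[OF _ assms(1)]) simp_all
  next
    case (2 j)
    then have j: "j \<in> I" unfolding D_def by blast
    have "rank2_hypergraph (V - {u}) (I - {j}) E"
      using 2 edge_subset unfolding D_def by (intro rank2_hypergraph_subset) auto
    moreover have "hall_condition w K (I - {j}) E"
      using assms(1) by (rule hall_condition_subset) auto
    moreover have "card I \<le> Suc (card (I - {j}))"
      using finite_edges j by (simp add: card_Suc_Diff1)
    moreover have "sum w (I - {j}) \<le> sum w I"
      using finite_edges by (intro sum_mono2) auto
    ultimately show ?thesis using that by blast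
  next
    case (3 j1 j2)
    note deg = 3(2) 3(1)[unfolded D_def]
    have "j1 \<in> I" "j2 \<in> I" using 3 unfolding D_def by blast+
    then have "card I \<le> Suc (card (I - {j2}))" "sum (w(j1 := w j1 + w j2)) (I - {j2}) = sum w I"
      using finite_edges sum_merge_weights[of "I - {j2}" j1 j2 w] 3(2)
      by (simp_all add: card_Suc_Diff1 insert_absorb)
    then show ?thesis
      using that[OF rank2_hypergraph_contract[OF deg] hall_condition_contract[OF deg assms(1)]] by auto
  qed
qed

end

lemma deficiency_bound:
  assumes "rank2_hypergraph V I E" "hall_condition w K I E" "0 < K"
    "real (card V) \<le> 2 powr L" "1 \<le> L"
  shows "real (card I) - real (card V) \<le> 16 * L * real (sum w I) / real K"
  using assms(1,2,4)
proof (induction "card V + card I" arbitrary: V I E w rule: less_induct)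
  case less
  interpret rank2_hypergraph V I E by (rule less.prems(1))
  consider "I = {}" | "I \<noteq> {}" "\<forall>u\<in>V. 3 \<le> degree u" | u where "u \<in> V" "degree u \<le> 2"
    by force
  then show ?case
  proof cases
    case 1
    then show ?thesis using assms(3,5) by simp
  next
    case 2
    then obtain i where i: "i \<in> I" "real K < 16 * L * real (w i)"
      using exists_heavy_edge[OF less.prems(2)] less.prems(3) assms(5) by blast
    have card_I: "card I = Suc (card (I - {i}))" by (rule card_Suc_Diff1[OF finite_edges i(1), symmetric])
    have "real (card (I - {i})) - real (card V) \<le> 16 * L * real (sum w (I - {i})) / real K"
    proof (rule less.hyps)
      show "rank2_hypergraph V (I - {i}) E" using edge_subset by (intro rank2_hypergraph_subset) auto
      show "hall_condition w K (I - {i}) E" using less.prems(2) by (rule hall_condition_subset) auto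
    qed (use card_I less.prems(3) in auto)
    moreover have "sum w I = w i + sum w (I - {i})" by (rule sum.remove[OF finite_edges i(1)])
    moreover have "1 < 16 * L * real (w i) / real K" using i(2) assms(3) by simp
    ultimately show ?thesis using card_I by (simp add: add_divide_distrib distrib_left)
  next
    case 3
    obtain I' E' w' where reduced: "rank2_hypergraph (V - {u}) I' E'" "hall_condition w' K I' E'"
      and "I' \<subseteq> I" and card_I: "card I \<le> Suc (card I')" and sum_w: "sum w' I' \<le> sum w I"
      using remove_low_degree_vertex[OF less.prems(2) 3(2)] by blast
    have card_V: "card V = Suc (card (V - {u}))" by (rule card_Suc_Diff1[OF finite_vertices 3(1), symmetric])
    have "real (card I') - real (card (V - {u})) \<le> 16 * L * real (sum w' I') / real K"
      using card_mono[OF finite_edges \<open>I' \<subseteq> I\<close>] card_V less.prems(3)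
      by (intro less.hyps[OF _ reduced]) auto
    also have "\<dots> \<le> 16 * L * real (sum w I) / real K"
      using sum_w assms(5) by (intro divide_right_mono mult_left_mono) (auto simp del: of_nat_sum)
    finally show ?thesis using card_I card_V by linarith
  qed
qed

section \<open>Probes of a data structure\<close>

lemma two_le_card_field: "2 \<le> card (UNIV :: 'a::{finite, field} set)"
proof -
  have "card {0::'a, 1} \<le> card (UNIV :: 'a set)" by (rule card_mono) auto
  then show ?thesis by simp
qed

lemma card_inputs: "card (inputs n :: 'a::finite list set) = card (UNIV :: 'a set) ^ n"
  unfolding inputs_def using card_lists_length_eq[of "UNIV :: 'a set" n] by simp

lemma kwise_independent_realizes:
  fixes f :: "'a::finite list \<Rightarrow> nat \<Rightarrow> 'a"
  assumes "kwise_independent n m f k" "k \<le> m" "A \<subseteq> {1..m}" "card A \<le> k"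
  shows "\<exists>x\<in>inputs n. \<forall>i\<in>A. f x i = y i"
proof -
  have finA: "finite A" using assms(3) finite_subset by blast
  have "k - card A \<le> card ({1..m} - A)"
    using assms(2-4) finA by (simp add: card_Diff_subset)
  then obtain B where B: "B \<subseteq> {1..m} - A" "card B = k - card A"
    by (meson obtain_subset_with_card_n)
  define S where "S = A \<union> B"
  have "finite B" using B(1) finite_subset by blast
  have "A \<inter> B = {}" using B(1) by blast
  then have "card S = k"
    unfolding S_def using card_Un_disjoint[OF finA \<open>finite B\<close>] B(2) assms(4) by simp
  moreover have "S \<subseteq> {1..m}" unfolding S_def using assms(3) B(1) by blast
  ultimately have "card {x \<in> inputs n. \<forall>i\<in>S. f x i = y i} * card (UNIV :: 'a set) ^ k = card (inputs n :: 'a list set)"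
    using assms(1) unfolding kwise_independent_def by blast
  moreover have "card (inputs n :: 'a list set) \<noteq> 0"
    by (simp add: card_inputs finite_UNIV_card_ge_0)
  ultimately have "{x \<in> inputs n. \<forall>i\<in>S. f x i = y i} \<noteq> {}"
    by (metis card.empty mult_zero_left)
  then show ?thesis unfolding S_def by blast
qed

text \<open>The map sending an assignment on \<open>A\<close> to the \<open>C\<close>-part of a point realizing it is
  injective.\<close>

lemma card_le_card_if_determined:
  fixes F :: "'x \<Rightarrow> 'i \<Rightarrow> 'a::finite" and G :: "'x \<Rightarrow> 'j \<Rightarrow> 'a"
  assumes "2 \<le> card (UNIV :: 'a set)" "finite A" "finite C"
    and realizes: "\<And>y. \<exists>x\<in>X. \<forall>i\<in>A. F x i = y i"
    and determined: "\<And>x x'. x \<in> X \<Longrightarrow> x' \<in> X \<Longrightarrow> \<forall>j\<in>C. G x j = G x' j \<Longrightarrow> \<forall>i\<in>A. F x i = F x' i"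
  shows "card A \<le> card C"
proof -
  define pick where "pick y = (SOME x. x \<in> X \<and> (\<forall>i\<in>A. F x i = y i))" for y
  have pick: "pick y \<in> X \<and> (\<forall>i\<in>A. F (pick y) i = y i)" for y
    unfolding pick_def by (rule someI_ex) (use realizes[of y] in blast)
  define code where "code y = restrict (G (pick y)) C" for y
  have "inj_on code (\<Pi>\<^sub>E i\<in>A. UNIV)"
  proof (rule inj_onI)
    fix y y' assume y: "y \<in> (\<Pi>\<^sub>E i\<in>A. UNIV)" "y' \<in> (\<Pi>\<^sub>E i\<in>A. UNIV)" and "code y = code y'"
    then have "\<forall>j\<in>C. G (pick y) j = G (pick y') j"
      unfolding code_def by (metis restrict_apply')
    then have "\<forall>i\<in>A. y i = y' i" using determined pick by metis
    then show "y = y'" using y by (intro PiE_ext) auto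
  qed
  moreover have "code ` (\<Pi>\<^sub>E i\<in>A. UNIV) \<subseteq> (\<Pi>\<^sub>E j\<in>C. UNIV)" unfolding code_def by auto
  ultimately have "card (\<Pi>\<^sub>E i\<in>A. (UNIV :: 'a set)) \<le> card (\<Pi>\<^sub>E j\<in>C. (UNIV :: 'a set))"
    using assms(3) by (intro card_inj_on_le) (auto intro: finite_PiE)
  then have "card (UNIV :: 'a set) ^ card A \<le> card (UNIV :: 'a set) ^ card C"
    using assms(2,3) by (simp add: card_PiE)
  then show ?thesis using assms(1) by (intro power_le_imp_le_exp) auto
qed

lemma hall_condition_of_probes:
  fixes f :: "'a::{finite, field} list \<Rightarrow> nat \<Rightarrow> 'a" and P :: "'a list \<Rightarrow> nat \<Rightarrow> 'a"
  assumes "kwise_independent n m f k" "k \<le> m"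
    and finite_probes: "\<And>i. i \<in> {1..m} \<Longrightarrow> finite (Q i)"
    and answers: "\<And>i x. i \<in> {1..m} \<Longrightarrow> x \<in> inputs n \<Longrightarrow> f x i = g i (\<lambda>j. if j \<in> Q i then P x j else 0)"
  shows "hall_condition (\<lambda>_. 1) k {1..m} Q"
  unfolding hall_condition_def
proof (intro allI impI)
  fix A assume A: "A \<subseteq> {1..m}" "sum (\<lambda>_. 1) A \<le> k"
  show "card A \<le> card (\<Union>(Q ` A))"
  proof (rule card_le_card_if_determined[where F = f and G = P and X = "inputs n"])
    show "finite A" using A(1) finite_subset by blast
    then show "finite (\<Union>(Q ` A))" using A(1) finite_probes by blast
    show "\<exists>x\<in>inputs n. \<forall>i\<in>A. f x i = y i" for y
      using A by (intro kwise_independent_realizes[OF assms(1,2)]) auto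
  next
    fix x x' assume x: "x \<in> inputs n" "x' \<in> inputs n" and "\<forall>j\<in>\<Union>(Q ` A). P x j = P x' j"
    then have "(\<lambda>j. if j \<in> Q i then P x j else 0) = (\<lambda>j. if j \<in> Q i then P x' j else 0)" if "i \<in> A" for i
      using that by auto
    then show "\<forall>i\<in>A. f x i = f x' i" using A(1) x answers by auto
  qed (rule two_le_card_field)
qed

theorem mainTheorem2:
  fixes f :: "'a::{finite, field} list \<Rightarrow> nat \<Rightarrow> 'a"
    and n m k s :: nat
  assumes "kwise_independent n m f k"
    and "k \<le> m"
    and "nonadaptive_ds n m f s 2"
    and "s \<ge> 2"
    and "real k > 8 * log 2 (real s)"
  shows "real s \<ge> real m - 16 * real m * log 2 (real s) / real k"
proof -
  obtain P :: "'a list \<Rightarrow> nat \<Rightarrow> 'a" and Q :: "nat \<Rightarrow> nat set" and g where ds: "\<forall>i\<in>{1..m}. Q i \<subseteq> {..<s} \<and> card (Q i) \<le> 2 \<and>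
      (\<forall>x\<in>inputs n. f x i = g i (\<lambda>j. if j \<in> Q i then P x j else 0))"
    using assms(3) unfolding nonadaptive_ds_def by blast
  have graph: "rank2_hypergraph {..<s} {1..m} Q" using ds by unfold_locales auto
  have "finite (Q i)" if "i \<in> {1..m}" for i
    using ds that by (meson finite_lessThan finite_subset)
  then have hall: "hall_condition (\<lambda>_. 1) k {1..m} Q"
    using ds by (intro hall_condition_of_probes[OF assms(1,2), where g = g and P = P]) blast+
  have log_s: "1 \<le> log 2 (real s)" using assms(4) by simp
  then have "0 < k" using assms(5) by linarith
  moreover have "real (card {..<s}) \<le> 2 powr log 2 (real s)" using assms(4) by simp
  ultimately have "real (card {1..m}) - real (card {..<s})
      \<le> 16 * log 2 (real s) * real (sum (\<lambda>_. 1) {1..m}) / real k"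
    by (rule deficiency_bound[OF graph hall _ _ log_s])
  then show ?thesis by (simp add: ac_simps)
qed

end
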